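(* Let $\alpha_1,\alpha_2\ge0$ with $\alpha_1+\alpha_2=1$ and $\alpha_2\ge\alpha_1$. Consider problem (P3): maximize $r$ over $(r,r_1,r_2,x,p_1,p_2)$ with $x\in\mathbb{R}$, subject to $r_k\ge\alpha_kr$ for $k=1,2$, $(r_1,r_2)\in\mathcal{C}_{\rm MAC}(x,p_1,p_2)$, $p_1+p_2\le\bar P$, $p_1,p_2\ge0$. Then there always exists an optimal UAV hovering location $x^*$ for (P3) with $0\le x^*\le D/2$.
   Context: Fix $D>0$, $H>0$, $\beta_0>0$, $\bar P>0$. Ground users GU 1, GU 2 are at horizontal positions $x_1=-D/2$, $x_2=D/2$; for a fixed UAV horizontal position $x$ (altitude $H$), $h_k(x)=\beta_0/((x-x_k)^2+H^2)$. For $p_1,p_2\ge0$, $\mathcal{C}_{\rm MAC}(x,p_1,p_2)$ is the set of $(r_1,r_2)$ with $r_1,r_2\ge0$, $r_1\le\log_2(1+p_1h_1(x))$, $r_2\le\log_2(1+p_2h_2(x))$, $r_1+r_2\le\log_2(1+p_1h_1(x)+p_2h_2(x))$. *)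

theory Defs
  imports Complex_Main
begin

text \<open>Channel gain from a UAV at horizontal position x (altitude H) to a ground user
  at horizontal position xk.\<close>
definition chan_gain :: "real \<Rightarrow> real \<Rightarrow> real \<Rightarrow> real \<Rightarrow> real" where
  "chan_gain beta0 H xk x = beta0 / ((x - xk)^2 + H^2)"

definition h1 :: "real \<Rightarrow> real \<Rightarrow> real \<Rightarrow> real \<Rightarrow> real" where
  "h1 D H beta0 x = chan_gain beta0 H (- D / 2) x"

definition h2 :: "real \<Rightarrow> real \<Rightarrow> real \<Rightarrow> real \<Rightarrow> real" where
  "h2 D H beta0 x = chan_gain beta0 H (D / 2) x"

definition C_MAC :: "real \<Rightarrow> real \<Rightarrow> real \<Rightarrow> real \<Rightarrow> real \<Rightarrow> real \<Rightarrow> (real \<times> real) set" where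
  "C_MAC D H beta0 x p1 p2 = {(r1, r2). r1 \<ge> 0 \<and> r2 \<ge> 0 \<and>
     r1 \<le> log 2 (1 + p1 * h1 D H beta0 x) \<and>
     r2 \<le> log 2 (1 + p2 * h2 D H beta0 x) \<and>
     r1 + r2 \<le> log 2 (1 + p1 * h1 D H beta0 x + p2 * h2 D H beta0 x)}"

definition P3_feasible :: "real \<Rightarrow> real \<Rightarrow> real \<Rightarrow> real \<Rightarrow> real \<Rightarrow> real \<Rightarrow>
    real \<Rightarrow> real \<Rightarrow> real \<Rightarrow> real \<Rightarrow> real \<Rightarrow> real \<Rightarrow> bool" where
  "P3_feasible D H beta0 Pbar a1 a2 r r1 r2 x p1 p2 \<longleftrightarrow>
     r1 \<ge> a1 * r \<and> r2 \<ge> a2 * r \<and>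
     (r1, r2) \<in> C_MAC D H beta0 x p1 p2 \<and>
     p1 + p2 \<le> Pbar \<and> p1 \<ge> 0 \<and> p2 \<ge> 0"

end

theory Submission
  imports Defs "HOL-Analysis.Analysis"
begin

text \<open>Since the two gains are mirror images of each other, a location \<open>x \<le> 0\<close> can be replaced
  by \<open>-x\<close>: this swaps the gains, so the user with the larger rate share \<open>\<alpha>\<^sub>2\<close> now sees the
  stronger channel, and redistributing the received SNRs between the users shows that the
  rates stay achievable without extra power. Locations beyond \<open>D/2\<close> are dominated by \<open>D/2\<close>,
  where both gains are larger. Hence every feasible rate is feasible with \<open>0 \<le> x \<le> D/2\<close>; on
  this segment the feasible set is compact, so the maximal rate is attained there.\<close>

text \<open>The constraints of (P3) with the rate split fixed to \<open>r\<^sub>k = \<alpha>\<^sub>k r\<close>, exponentiated so that no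
  \<open>log\<close> of a possibly nonpositive argument occurs.\<close>

definition mac_rate_feasible :: "real \<Rightarrow> real \<Rightarrow> real \<Rightarrow> real \<Rightarrow> real \<Rightarrow> real \<Rightarrow> real \<Rightarrow> bool" where
  "mac_rate_feasible a1 a2 g1 g2 p1 p2 r \<longleftrightarrow> 0 \<le> p1 \<and> 0 \<le> p2 \<and>
     2 powr (a1 * r) \<le> 1 + p1 * g1 \<and> 2 powr (a2 * r) \<le> 1 + p2 * g2 \<and>
     2 powr r \<le> 1 + p1 * g1 + p2 * g2"

lemma mac_rate_feasible_mono_gains:
  assumes "mac_rate_feasible a1 a2 g1 g2 p1 p2 r" "g1 \<le> g1'" "g2 \<le> g2'"
  shows "mac_rate_feasible a1 a2 g1' g2' p1 p2 r"
proof -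
  have "p1 * g1 \<le> p1 * g1'" "p2 * g2 \<le> p2 * g2'"
    using assms by (auto simp: mac_rate_feasible_def intro: mult_left_mono)
  then show ?thesis using assms(1) by (auto simp: mac_rate_feasible_def)
qed

lemma mac_rate_feasible_le_log:
  assumes "mac_rate_feasible a1 a2 g1 g2 p1 p2 r" "g1 \<le> G" "g2 \<le> G" "p1 + p2 \<le> P" "0 \<le> G"
  shows "r \<le> log 2 (1 + P * G)"
proof -
  have "p1 * g1 + p2 * g2 \<le> (p1 + p2) * G"
    using assms by (auto simp: mac_rate_feasible_def distrib_right intro: add_mono mult_left_mono)
  also have "\<dots> \<le> P * G" using assms by (intro mult_right_mono) auto
  finally have "2 powr r \<le> 1 + P * G" using assms(1) by (simp add: mac_rate_feasible_def)
  moreover have "0 < 2 powr r" by simp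
  ultimately have "0 < 1 + P * G" "2 powr r \<le> 1 + P * G" by linarith+
  then show ?thesis by (simp add: le_log_iff)
qed

text \<open>Keeping the total received SNR \<open>q\<^sub>1 + q\<^sub>2\<close> fixed, moving SNR from the user on the weak
  gain \<open>v\<close> to the one on the strong gain \<open>u\<close> can only save power.\<close>

lemma snr_reallocation_saves_power:
  fixes u v q1 q2 s1 s2 :: real
  assumes "0 < v" "v \<le> u" "s1 \<le> s2" "s1 \<le> q1" "s2 \<le> q2"
  obtains t where "s1 \<le> t" "s2 \<le> q1 + q2 - t" "t / v + (q1 + q2 - t) / u \<le> q1 / u + q2 / v"
proof
  define t where "t = min q2 (q1 + q2 - s2)"
  show "s1 \<le> t" "s2 \<le> q1 + q2 - t" using assms by (auto simp: t_def)
  have "(q2 - t) / u \<le> (q2 - t) / v" using assms by (intro divide_left_mono) (auto simp: t_def)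
  moreover have "(q1 + q2 - t) / u = q1 / u + (q2 - t) / u" "q2 / v = t / v + (q2 - t) / v"
    by (simp_all add: add_divide_distrib diff_divide_distrib)
  ultimately show "t / v + (q1 + q2 - t) / u \<le> q1 / u + q2 / v" by linarith
qed

lemma mac_rate_feasible_swap_gains:
  assumes feas: "mac_rate_feasible a1 a2 u v p1 p2 r"
    and "0 < v" "v \<le> u" "0 \<le> a1" "a1 \<le> a2" "0 \<le> r"
  obtains p1' p2' where "mac_rate_feasible a1 a2 v u p1' p2' r" "p1' + p2' \<le> p1 + p2"
proof -
  define s1 s2 where "s1 = 2 powr (a1 * r) - 1" and "s2 = 2 powr (a2 * r) - 1"
  have "0 \<le> s1" "s1 \<le> s2" using assms by (auto simp: s1_def s2_def ge_one_powr_ge_zero mult_right_mono)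
  moreover have "s1 \<le> p1 * u" "s2 \<le> p2 * v" "2 powr r \<le> 1 + p1 * u + p2 * v"
    using feas by (auto simp: mac_rate_feasible_def s1_def s2_def)
  ultimately obtain t where t: "s1 \<le> t" "s2 \<le> p1 * u + p2 * v - t"
      and saving: "t / v + (p1 * u + p2 * v - t) / u \<le> p1 * u / u + p2 * v / v"
    using assms snr_reallocation_saves_power by blast
  show ?thesis
  proof
    have "0 < u" "0 \<le> t" "0 \<le> p1 * u + p2 * v - t"
      using assms t \<open>0 \<le> s1\<close> \<open>s1 \<le> s2\<close> by linarith+
    then have "0 \<le> t / v" "0 \<le> (p1 * u + p2 * v - t) / u" using assms by simp_all
    then show "mac_rate_feasible a1 a2 v u (t / v) ((p1 * u + p2 * v - t) / u) r"
      using t \<open>0 < u\<close> \<open>2 powr r \<le> _\<close> assms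
      by (auto simp: mac_rate_feasible_def s1_def s2_def)
    show "t / v + (p1 * u + p2 * v - t) / u \<le> p1 + p2"
      using saving assms by simp
  qed
qed

lemma h_eq:
  "h1 D H b x = b / ((x + D / 2)^2 + H^2)" "h2 D H b x = b / ((x - D / 2)^2 + H^2)"
  by (simp_all add: h1_def h2_def chan_gain_def)

lemma h_pos: "0 < H \<Longrightarrow> 0 < b \<Longrightarrow> 0 < h1 D H b x \<and> 0 < h2 D H b x"
  unfolding h_eq by (auto intro!: divide_pos_pos add_nonneg_pos)

lemma h_le_peak: "0 < H \<Longrightarrow> 0 < b \<Longrightarrow> h1 D H b x \<le> b / H^2 \<and> h2 D H b x \<le> b / H^2"
  unfolding h_eq by (auto intro!: divide_left_mono add_nonneg_pos mult_pos_pos)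

lemma h_reflect: "h1 D H b (- x) = h2 D H b x" "h2 D H b (- x) = h1 D H b x"
  unfolding h_eq by (simp_all add: power2_eq_square algebra_simps)

lemma h2_le_h1_nonpos:
  assumes "x \<le> 0" "0 < D" "0 < H" "0 < b"
  shows "h2 D H b x \<le> h1 D H b x"
proof -
  have "(x + D / 2)^2 \<le> (x - D / 2)^2"
    using assms mult_nonneg_nonpos[of D x] by (simp add: power2_eq_square algebra_simps)
  then show ?thesis unfolding h_eq using assms by (intro divide_left_mono) (auto intro!: add_nonneg_pos mult_pos_pos)
qed

lemma h_le_h_half:
  assumes "D / 2 \<le> x" "0 < D" "0 < H" "0 < b"
  shows "h1 D H b x \<le> h1 D H b (D / 2) \<and> h2 D H b x \<le> h2 D H b (D / 2)"
proof -
  have "(D / 2 + D / 2)^2 \<le> (x + D / 2)^2" using assms by (intro power_mono) auto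
  then show ?thesis unfolding h_eq using assms by (auto intro!: divide_left_mono add_nonneg_pos mult_pos_pos)
qed

lemma continuous_on_chan_gain [continuous_intros]:
  "continuous_on S f \<Longrightarrow> 0 < H \<Longrightarrow> continuous_on S (\<lambda>z. chan_gain b H xk (f z))"
  unfolding chan_gain_def
  by (intro continuous_intros) (auto intro!: add_nonneg_pos[THEN less_imp_neq, symmetric])

abbreviation rate_feasible_at ::
    "real \<Rightarrow> real \<Rightarrow> real \<Rightarrow> real \<Rightarrow> real \<Rightarrow> real \<Rightarrow> real \<Rightarrow> real \<Rightarrow> real \<Rightarrow> real \<Rightarrow> bool" where
  "rate_feasible_at D H b P a1 a2 x p1 p2 r \<equiv>
     p1 + p2 \<le> P \<and> mac_rate_feasible a1 a2 (h1 D H b x) (h2 D H b x) p1 p2 r"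

lemma P3_feasible_imp_rate_feasible_at:
  assumes "P3_feasible D H b P a1 a2 r r1 r2 x p1 p2" "0 < H" "0 < b" "a1 + a2 = 1"
  shows "rate_feasible_at D H b P a1 a2 x p1 p2 r"
proof -
  let ?q1 = "p1 * h1 D H b x" and ?q2 = "p2 * h2 D H b x"
  have q: "0 \<le> ?q1" "0 \<le> ?q2"
    using assms h_pos[of H b D x] by (auto simp: P3_feasible_def)
  have "a1 * r \<le> log 2 (1 + ?q1)" "a2 * r \<le> log 2 (1 + ?q2)" "r \<le> log 2 (1 + ?q1 + ?q2)"
    using assms(1) \<open>a1 + a2 = 1\<close> distrib_right[of a1 a2 r]
    by (auto simp: P3_feasible_def C_MAC_def)
  then show ?thesis
    using q assms(1) by (simp add: P3_feasible_def mac_rate_feasible_def le_log_iff)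
qed

lemma rate_feasible_at_imp_P3_feasible:
  assumes "rate_feasible_at D H b P a1 a2 x p1 p2 r"
    and "0 < H" "0 < b" "a1 + a2 = 1" "0 \<le> a1" "0 \<le> a2" "0 \<le> r"
  shows "P3_feasible D H b P a1 a2 r (a1 * r) (a2 * r) x p1 p2"
proof -
  let ?q1 = "p1 * h1 D H b x" and ?q2 = "p2 * h2 D H b x"
  have q: "0 \<le> ?q1" "0 \<le> ?q2"
    using assms h_pos[of H b D x] by (auto simp: mac_rate_feasible_def)
  have "a1 * r \<le> log 2 (1 + ?q1)" "a2 * r \<le> log 2 (1 + ?q2)" "r \<le> log 2 (1 + ?q1 + ?q2)"
    using q assms(1) by (auto simp: mac_rate_feasible_def le_log_iff)
  then show ?thesis
    using assms \<open>a1 + a2 = 1\<close> distrib_right[of a1 a2 r]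
    by (auto simp: P3_feasible_def C_MAC_def mac_rate_feasible_def)
qed

lemma rate_feasible_at_in_half_segment:
  assumes "rate_feasible_at D H b P a1 a2 x p1 p2 r"
    and "0 < D" "0 < H" "0 < b" "0 \<le> a1" "a1 \<le> a2" "0 \<le> r"
  obtains x' p1' p2' where "0 \<le> x'" "x' \<le> D / 2" "rate_feasible_at D H b P a1 a2 x' p1' p2' r"
proof -
  obtain y q1 q2 where "0 \<le> y" and y: "rate_feasible_at D H b P a1 a2 y q1 q2 r"
  proof (cases "x \<le> 0")
    case True
    with assms obtain p1' p2' where
      "mac_rate_feasible a1 a2 (h2 D H b x) (h1 D H b x) p1' p2' r" "p1' + p2' \<le> p1 + p2"
      using mac_rate_feasible_swap_gains h_pos h2_le_h1_nonpos by metis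
    then have "rate_feasible_at D H b P a1 a2 (- x) p1' p2' r"
      using assms(1) by (simp add: h_reflect)
    then show ?thesis using that[of "- x"] True by simp
  next
    case False
    then show ?thesis using that[of x p1 p2] assms(1) by simp
  qed
  show ?thesis
  proof (cases "y \<le> D / 2")
    case False
    then have "rate_feasible_at D H b P a1 a2 (D / 2) q1 q2 r"
      using y h_le_h_half[of D y H b] assms mac_rate_feasible_mono_gains by auto
    then show ?thesis using that[of "D / 2" q1 q2] \<open>0 < D\<close> by simp
  qed (use that \<open>0 \<le> y\<close> y in blast)
qed

definition half_segment_region ::
    "real \<Rightarrow> real \<Rightarrow> real \<Rightarrow> real \<Rightarrow> real \<Rightarrow> real \<Rightarrow> (real \<times> real \<times> real \<times> real) set" where
  "half_segment_region D H b P a1 a2 =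
     {(x, p1, p2, r). 0 \<le> x \<and> x \<le> D / 2 \<and> 0 \<le> r \<and> rate_feasible_at D H b P a1 a2 x p1 p2 r}"

lemma compact_half_segment_region:
  assumes "0 < H" "0 < b"
  shows "compact (half_segment_region D H b P a1 a2)"
proof (rule compact_eq_bounded_closed[THEN iffD2, OF conjI])
  let ?Rm = "log 2 (1 + P * (b / H^2))"
  have "half_segment_region D H b P a1 a2 \<subseteq> cbox (0, 0, 0, 0) (D / 2, P, P, ?Rm)"
    using assms h_le_peak mac_rate_feasible_le_log[of a1 a2 "h1 D H b _" "h2 D H b _"]
    by (fastforce simp: half_segment_region_def mac_rate_feasible_def)
  then show "bounded (half_segment_region D H b P a1 a2)"
    using bounded_cbox bounded_subset by blast
  show "closed (half_segment_region D H b P a1 a2)"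
    unfolding half_segment_region_def mac_rate_feasible_def h1_def h2_def case_prod_unfold
    using assms by (intro closed_Collect_conj closed_Collect_le continuous_intros) auto
qed

lemma half_segment_region_has_max_rate:
  assumes "0 < H" "0 < b" "0 \<le> D" "0 \<le> P"
  obtains x p1 p2 r where "(x, p1, p2, r) \<in> half_segment_region D H b P a1 a2"
    "\<And>x' p1' p2' r'. (x', p1', p2', r') \<in> half_segment_region D H b P a1 a2 \<Longrightarrow> r' \<le> r"
proof -
  have "(0, 0, 0, 0) \<in> half_segment_region D H b P a1 a2"
    using assms by (simp add: half_segment_region_def mac_rate_feasible_def)
  then have "\<exists>z \<in> half_segment_region D H b P a1 a2.
      \<forall>w \<in> half_segment_region D H b P a1 a2. snd (snd (snd w)) \<le> snd (snd (snd z))"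
    by (intro continuous_attains_sup compact_half_segment_region assms continuous_intros) auto
  then obtain z where "z \<in> half_segment_region D H b P a1 a2"
      "\<forall>w \<in> half_segment_region D H b P a1 a2. snd (snd (snd w)) \<le> snd (snd (snd z))"
    by blast
  then show ?thesis using that by (cases z) fastforce
qed

theorem proposition2:
  fixes D H beta0 Pbar a1 a2 :: real
  assumes "D > 0" "H > 0" "beta0 > 0" "Pbar > 0"
    and "a1 \<ge> 0" "a2 \<ge> 0" "a1 + a2 = 1" "a2 \<ge> a1"
  shows "\<exists>r r1 r2 x p1 p2.
           P3_feasible D H beta0 Pbar a1 a2 r r1 r2 x p1 p2 \<and>
           (\<forall>r' r1' r2' x' p1' p2'. P3_feasible D H beta0 Pbar a1 a2 r' r1' r2' x' p1' p2' \<longrightarrow> r' \<le> r) \<and>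
           0 \<le> x \<and> x \<le> D / 2"
proof -
  obtain x p1 p2 r where opt: "(x, p1, p2, r) \<in> half_segment_region D H beta0 Pbar a1 a2"
    and max: "\<And>x' p1' p2' r'. (x', p1', p2', r') \<in> half_segment_region D H beta0 Pbar a1 a2 \<Longrightarrow> r' \<le> r"
    using half_segment_region_has_max_rate assms by (metis less_imp_le)
  have "r' \<le> r" if "P3_feasible D H beta0 Pbar a1 a2 r' r1' r2' x' p1' p2'" for r' r1' r2' x' p1' p2'
  proof (cases "0 \<le> r'")
    case True
    with that assms obtain x'' p1'' p2'' where "0 \<le> x''" "x'' \<le> D / 2"
        "rate_feasible_at D H beta0 Pbar a1 a2 x'' p1'' p2'' r'"
      using P3_feasible_imp_rate_feasible_at rate_feasible_at_in_half_segment by metis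
    then show ?thesis using True max by (auto simp: half_segment_region_def)
  qed (use opt in \<open>auto simp: half_segment_region_def\<close>)
  moreover have "P3_feasible D H beta0 Pbar a1 a2 r (a1 * r) (a2 * r) x p1 p2"
    using opt assms rate_feasible_at_imp_P3_feasible by (auto simp: half_segment_region_def)
  ultimately show ?thesis using opt unfolding half_segment_region_def by blast
qed

end
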